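(* Let $(V,\langle\cdot\,,\cdot\rangle_V)$ be an admissible integral $\mathrm{Cl}_{r,s}$-module and $(U,\langle\cdot\,,\cdot\rangle_U)$ a minimal dimensional admissible integral $\mathrm{Cl}_{1,1}$-module. Then $V\otimes U$ with the scalar product $\langle v\otimes u,v'\otimes u'\rangle=\langle v,v'\rangle_V\langle u,u'\rangle_U$ is (carries the structure of) an admissible integral $\mathrm{Cl}_{r+1,s+1}$-module.
   Context: A scalar product is a real symmetric non-degenerate bilinear form. $\mathrm{Cl}_{p,q}$ is the real Clifford algebra generated by $\mathbb R^{p,q}$ ($\mathbb R^{p+q}$ with quadratic form $x_1^2+\dots+x_p^2-x_{p+1}^2-\dots-x_{p+q}^2$) with relation $z^2=-\langle z,z\rangle\cdot1$; orthonormal generators $z_k$ satisfy $\langle z_k,z_l\rangle=0$ ($k\neq l$), $\langle z_k,z_k\rangle=\pm1$. A $\mathrm{Cl}_{p,q}$-module $V$ with representation $J$ is admissible if it carries a scalar product with $\langle J_zu,v\rangle_V=-\langle u,J_zv\rangle_V$ for all $z,u,v$; it is an admissible integral module if it has a basis $\{v_\alpha\}$ with $\langle v_\alpha,v_\beta\rangle_V=0$ ($\alpha\neq\beta$), $\langle v_\alpha,v_\alpha\rangle_V=\pm1$, and $\langle J_{z_k}v_\alpha,v_\beta\rangle_V\in\{1,-1,0\}$ for all orthonormal generators $z_k$ and all $\alpha,\beta$. Minimal dimensional means of minimal dimension among admissible $\mathrm{Cl}_{1,1}$-modules (this dimension is $4$). *)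

theory Defs
  imports "HOL-Analysis.Analysis"
begin

definition qform :: "nat \<Rightarrow> nat \<Rightarrow> (nat \<Rightarrow> real) \<Rightarrow> real" where
  "qform p q z = (\<Sum>k<p. (z k)^2) - (\<Sum>k\<in>{p..<p+q}. (z k)^2)"

text \<open>J k is the action of the k-th orthonormal generator z_k; J_z = sum_k z_k J_{z_k}.\<close>
definition Jz :: "nat \<Rightarrow> nat \<Rightarrow> (nat \<Rightarrow> 'v \<Rightarrow> 'v) \<Rightarrow> (nat \<Rightarrow> real) \<Rightarrow> 'v \<Rightarrow> 'v::real_vector" where
  "Jz p q J z x = (\<Sum>k<p+q. z k *\<^sub>R J k x)"

definition clifford_module :: "nat \<Rightarrow> nat \<Rightarrow> (nat \<Rightarrow> 'v \<Rightarrow> 'v) \<Rightarrow> 'v::real_vector set \<Rightarrow> bool" where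
  "clifford_module p q J W \<longleftrightarrow> subspace W \<and> (\<exists>S. finite S \<and> W \<subseteq> span S) \<and>
     (\<forall>k<p+q. (\<forall>x\<in>W. J k x \<in> W) \<and>
        (\<forall>x\<in>W. \<forall>y\<in>W. J k (x + y) = J k x + J k y) \<and>
        (\<forall>c. \<forall>x\<in>W. J k (c *\<^sub>R x) = c *\<^sub>R J k x)) \<and>
     (\<forall>z. \<forall>x\<in>W. Jz p q J z (Jz p q J z x) = - (qform p q z) *\<^sub>R x)"

definition scalar_product :: "'v::real_vector set \<Rightarrow> ('v \<Rightarrow> 'v \<Rightarrow> real) \<Rightarrow> bool" where
  "scalar_product W B \<longleftrightarrow>
     (\<forall>x\<in>W. \<forall>y\<in>W. B x y = B y x) \<and>
     (\<forall>x\<in>W. \<forall>y\<in>W. \<forall>z\<in>W. B (x + y) z = B x z + B y z) \<and>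
     (\<forall>c. \<forall>x\<in>W. \<forall>y\<in>W. B (c *\<^sub>R x) y = c * B x y) \<and>
     (\<forall>x\<in>W. (\<forall>y\<in>W. B x y = 0) \<longrightarrow> x = 0)"

definition admissible_module ::
  "nat \<Rightarrow> nat \<Rightarrow> (nat \<Rightarrow> 'v \<Rightarrow> 'v) \<Rightarrow> 'v::real_vector set \<Rightarrow> ('v \<Rightarrow> 'v \<Rightarrow> real) \<Rightarrow> bool" where
  "admissible_module p q J W B \<longleftrightarrow> clifford_module p q J W \<and> scalar_product W B \<and>
     (\<forall>z. \<forall>u\<in>W. \<forall>v\<in>W. B (Jz p q J z u) v = - B u (Jz p q J z v))"

definition admissible_integral_module ::
  "nat \<Rightarrow> nat \<Rightarrow> (nat \<Rightarrow> 'v \<Rightarrow> 'v) \<Rightarrow> 'v::real_vector set \<Rightarrow> ('v \<Rightarrow> 'v \<Rightarrow> real) \<Rightarrow> bool" where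
  "admissible_integral_module p q J W B \<longleftrightarrow> admissible_module p q J W B \<and>
     (\<exists>Bas. Bas \<subseteq> W \<and> independent Bas \<and> span Bas = W \<and>
        (\<forall>a\<in>Bas. \<forall>b\<in>Bas. a \<noteq> b \<longrightarrow> B a b = 0) \<and>
        (\<forall>a\<in>Bas. B a a = 1 \<or> B a a = -1) \<and>
        (\<forall>k<p+q. \<forall>a\<in>Bas. \<forall>b\<in>Bas. B (J k a) b \<in> {1, -1, 0}))"

text \<open>Every admissible
  Cl_{1,1}-module of smaller dimension is isomorphic to one carried by a subspace of
  real^'m, so it suffices to compare against modules on subspaces.\<close>
definition minimal_admissible_Cl11 ::
  "(nat \<Rightarrow> real^'m \<Rightarrow> real^'m) \<Rightarrow> (real^'m \<Rightarrow> real^'m \<Rightarrow> real) \<Rightarrow> bool" where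
  "minimal_admissible_Cl11 J B \<longleftrightarrow> admissible_module 1 1 J UNIV B \<and>
     (\<forall>(W::(real^'m) set) J' B'. admissible_module 1 1 J' W B' \<and> W \<noteq> {0} \<longrightarrow> CARD('m) \<le> dim W)"

definition tensor :: "real^'n \<Rightarrow> real^'m \<Rightarrow> real^('n \<times> 'm)" where
  "tensor v u = (\<chi> ij. v $ fst ij * u $ snd ij)"

end

theory Submission
  imports Defs
begin

text \<open>Pick a vector u of the minimal Cl(1,1)-module U with B(u,u) = \<plusminus>1. The vectors
  u, J0 u, J1 u, J0 J1 u are orthogonal of norm \<plusminus>1 and span an admissible submodule, so by
  minimality they form a basis of U. The map A exchanging u \<leftrightarrow> J0 u and J1 u \<leftrightarrow> J0 J1 u
  is a symmetric involution anticommuting with J0 and J1. On V \<otimes> U let the generators of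
  Cl(r+1,s+1) act by 1 \<otimes> J0, by J^V_k \<otimes> A and by 1 \<otimes> J1: the cross terms in the square
  of J_z cancel because A anticommutes with the J^U_z, skewness holds because A is symmetric
  while J^V_k is skew, and on the product basis of the integral basis of V with the frame of U
  every generator is a tensor product of maps with matrix entries in {1,-1,0}.\<close>

section \<open>Bilinear maps and tensors of coordinate vectors\<close>

lemma linear_tensor_left: "linear (\<lambda>v. tensor v u)"
  by (rule linearI) (auto simp: tensor_def vec_eq_iff algebra_simps)

lemma linear_tensor_right: "linear (\<lambda>u. tensor v u)"
  by (rule linearI) (auto simp: tensor_def vec_eq_iff algebra_simps)

lemma axis_pair_eq_tensor: "axis (i, j) (1::real) = tensor (axis i 1) (axis j 1)"
  by (auto simp: tensor_def vec_eq_iff axis_def)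

lemma Basis_vec_pair_tensor:
  "b \<in> (Basis :: (real^('n::finite \<times> 'm::finite)) set) \<Longrightarrow> \<exists>i j. b = tensor (axis i 1) (axis j 1)"
  by (auto simp: Basis_vec_def axis_pair_eq_tensor)

lemma linear_eq_on_tensors:
  fixes f g :: "real^('n::finite \<times> 'm::finite) \<Rightarrow> 'b::real_vector"
  assumes "linear f" "linear g" "\<And>v u. f (tensor v u) = g (tensor v u)"
  shows "f = g"
  using assms Basis_vec_pair_tensor by (metis linear_eq_stdbasis)

lemma bilinear_eq_on_tensors:
  fixes f g :: "real^('n::finite \<times> 'm::finite) \<Rightarrow> real^('n \<times> 'm) \<Rightarrow> 'b::real_vector"
  assumes "bilinear f" "bilinear g"
    and "\<And>v u v' u'. f (tensor v u) (tensor v' u') = g (tensor v u) (tensor v' u')"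
  shows "f = g"
  using assms Basis_vec_pair_tensor by (metis bilinear_eq_stdbasis)

lemma span_tensor_image_UNIV:
  assumes "span A = UNIV" "span B = UNIV"
  shows "span ((\<lambda>(a, b). tensor a b) ` (A \<times> B)) = UNIV"
proof -
  let ?S = "span ((\<lambda>(a, b). tensor a b) ` (A \<times> B))"
  have left: "tensor v b \<in> ?S" if "b \<in> B" for v b
  proof -
    have "tensor v b \<in> (\<lambda>a. tensor a b) ` span A"
      using assms(1) by simp
    also have "\<dots> = span ((\<lambda>a. tensor a b) ` A)"
      by (rule span_linear_image[OF linear_tensor_left, symmetric])
    also have "\<dots> \<subseteq> ?S"
      using that by (intro span_mono) auto
    finally show ?thesis .
  qed
  have "tensor v u \<in> ?S" for v u
  proof -
    have "tensor v u \<in> tensor v ` span B"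
      using assms(2) by simp
    also have "\<dots> = span (tensor v ` B)"
      by (rule span_linear_image[OF linear_tensor_right, symmetric])
    also have "\<dots> \<subseteq> ?S"
      using left by (intro span_minimal) auto
    finally show ?thesis .
  qed
  then have "Basis \<subseteq> ?S"
    using Basis_vec_pair_tensor by blast
  then show ?thesis
    using span_Basis span_minimal by blast
qed

definition tensor_map ::
  "(real^'n::finite \<Rightarrow> real^'n) \<Rightarrow> (real^'m::finite \<Rightarrow> real^'m) \<Rightarrow> real^('n \<times> 'm) \<Rightarrow> real^('n \<times> 'm)" where
  "tensor_map f g w = (\<Sum>ij\<in>UNIV. w $ ij *\<^sub>R tensor (f (axis (fst ij) 1)) (g (axis (snd ij) 1)))"

lemma linear_tensor_map: "linear (tensor_map f g)"
  unfolding tensor_map_def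
  by (intro linearI) (simp_all add: scaleR_add_left sum.distrib scaleR_sum_right)

lemma linear_axis_expansion:
  fixes f :: "real^'n::finite \<Rightarrow> 'b::real_vector"
  assumes "linear f"
  shows "f v = (\<Sum>i\<in>UNIV. v $ i *\<^sub>R f (axis i 1))"
proof -
  have "f v = f (\<Sum>i\<in>UNIV. v $ i *\<^sub>R axis i 1)"
    using basis_expansion[of v] by (simp add: scalar_mult_eq_scaleR)
  then show ?thesis
    using assms by (simp add: linear_sum linear_scale)
qed

lemma tensor_map_tensor:
  assumes "linear f" "linear g"
  shows "tensor_map f g (tensor v u) = tensor (f v) (g u)"
proof -
  have "tensor (f v) (g u) =
      tensor (\<Sum>i\<in>UNIV. v $ i *\<^sub>R f (axis i 1)) (\<Sum>j\<in>UNIV. u $ j *\<^sub>R g (axis j 1))"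
    using linear_axis_expansion[OF assms(1)] linear_axis_expansion[OF assms(2)] by metis
  also have "\<dots> = (\<Sum>j\<in>UNIV. \<Sum>i\<in>UNIV. (u $ j * v $ i) *\<^sub>R tensor (f (axis i 1)) (g (axis j 1)))"
    by (simp add: linear_sum[OF linear_tensor_left] linear_sum[OF linear_tensor_right]
        linear_scale[OF linear_tensor_left] linear_scale[OF linear_tensor_right] scaleR_sum_right)
  also have "\<dots> = (\<Sum>i\<in>UNIV. \<Sum>j\<in>UNIV. (v $ i * u $ j) *\<^sub>R tensor (f (axis i 1)) (g (axis j 1)))"
    by (rule trans[OF sum.swap]) (simp add: mult.commute)
  also have "\<dots> = tensor_map f g (tensor v u)"
    unfolding tensor_map_def sum.cartesian_product by (simp add: tensor_def case_prod_beta)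
  finally show ?thesis by simp
qed

lemma bilinear_compose_left:
  assumes "bilinear h" "linear f"
  shows "bilinear (\<lambda>x y. h (f x) y)"
  using assms linear_compose[OF assms(2)] unfolding bilinear_def o_def by blast

lemma bilinear_compose_right:
  assumes "bilinear h" "linear f"
  shows "bilinear (\<lambda>x y. h x (f y))"
  using assms linear_compose[OF assms(2)] unfolding bilinear_def o_def by blast

lemma bilinear_uminus: "bilinear h \<Longrightarrow> bilinear (\<lambda>x y. - h x y)"
  unfolding bilinear_def by (simp add: linear_compose_neg)

lemma bilinear_swap: "bilinear h \<Longrightarrow> bilinear (\<lambda>x y. h y x)"
  unfolding bilinear_def by blast

section \<open>Signed orthonormal sets\<close>

definition signed_orthonormal :: "('a \<Rightarrow> 'a \<Rightarrow> real) \<Rightarrow> 'a set \<Rightarrow> bool" where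
  "signed_orthonormal B S \<longleftrightarrow>
     (\<forall>a\<in>S. \<forall>b\<in>S. a \<noteq> b \<longrightarrow> B a b = 0) \<and> (\<forall>a\<in>S. B a a = 1 \<or> B a a = -1)"

definition integral_on :: "('a \<Rightarrow> 'a \<Rightarrow> real) \<Rightarrow> 'a set \<Rightarrow> ('a \<Rightarrow> 'a) \<Rightarrow> bool" where
  "integral_on B S f \<longleftrightarrow> (\<forall>a\<in>S. \<forall>b\<in>S. B (f a) b \<in> {1, -1, 0})"

lemma admissible_integral_module_iff:
  "admissible_integral_module p q J W B \<longleftrightarrow> admissible_module p q J W B \<and>
     (\<exists>Bas. Bas \<subseteq> W \<and> independent Bas \<and> span Bas = W \<and> signed_orthonormal B Bas \<and>
        (\<forall>k<p+q. integral_on B Bas (J k)))"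
  unfolding admissible_integral_module_def signed_orthonormal_def integral_on_def
  by simp

lemma signed_orthonormal_integral_on_id:
  "signed_orthonormal B S \<Longrightarrow> integral_on B S id"
  unfolding signed_orthonormal_def integral_on_def by fastforce

lemma integral_on_signed_permutation:
  assumes "signed_orthonormal B S" "\<And>y. linear (\<lambda>x. B x y)"
    and "\<forall>a\<in>S. f a \<in> S \<or> - f a \<in> S"
  shows "integral_on B S f"
  unfolding integral_on_def
proof (intro ballI)
  fix a b assume "a \<in> S" "b \<in> S"
  have sign: "B c b \<in> {1, -1, 0}" if "c \<in> S" for c
    using signed_orthonormal_integral_on_id[OF assms(1)] that \<open>b \<in> S\<close>
    unfolding integral_on_def by simp
  consider "f a \<in> S" | "- f a \<in> S"
    using assms(3) \<open>a \<in> S\<close> by blast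
  then show "B (f a) b \<in> {1, -1, 0}"
  proof cases
    case 2
    then show ?thesis
      using sign[OF 2] linear_neg[OF assms(2), of "f a" b] by auto
  qed (use sign in blast)
qed

lemma signed_orthonormal_tensor:
  assumes T: "\<forall>v u v' u'. T (tensor v u) (tensor v' u') = BV v v' * BU u u'"
    and V: "signed_orthonormal BV S" and U: "signed_orthonormal BU E"
  shows "signed_orthonormal T ((\<lambda>(a, b). tensor a b) ` (S \<times> E))"
  unfolding signed_orthonormal_def
proof (intro conjI ballI impI)
  fix p q assume "p \<in> (\<lambda>(a, b). tensor a b) ` (S \<times> E)" "q \<in> (\<lambda>(a, b). tensor a b) ` (S \<times> E)" "p \<noteq> q"
  then obtain a b a' b' where "a \<in> S" "b \<in> E" "a' \<in> S" "b' \<in> E"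
    and "p = tensor a b" "q = tensor a' b'" "a \<noteq> a' \<or> b \<noteq> b'"
    by auto
  then show "T p q = 0"
    using V U unfolding signed_orthonormal_def by (auto simp: T)
next
  fix p assume "p \<in> (\<lambda>(a, b). tensor a b) ` (S \<times> E)"
  then obtain a b where "a \<in> S" "b \<in> E" "p = tensor a b"
    by auto
  moreover have "BV a a = 1 \<or> BV a a = -1" "BU b b = 1 \<or> BU b b = -1"
    using V U \<open>a \<in> S\<close> \<open>b \<in> E\<close> unfolding signed_orthonormal_def by auto
  ultimately show "T p p = 1 \<or> T p p = -1"
    by (auto simp: T)
qed

lemma integral_on_tensor_map:
  assumes T: "\<forall>v u v' u'. T (tensor v u) (tensor v' u') = BV v v' * BU u u'"
    and "linear f" "linear g" "integral_on BV S f" "integral_on BU E g"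
  shows "integral_on T ((\<lambda>(a, b). tensor a b) ` (S \<times> E)) (tensor_map f g)"
proof -
  have "x * y \<in> {1, -1, 0}" if "x \<in> {1, -1, 0}" "y \<in> {1, -1, 0}" for x y :: real
    using that by auto
  then show ?thesis
    using assms(4,5) unfolding integral_on_def
    by (auto simp: tensor_map_tensor[OF assms(2,3)] T)
qed

lemma orthogonal_sum_coefficient:
  fixes B :: "'a::real_vector \<Rightarrow> 'a \<Rightarrow> real"
  assumes lin: "\<And>y. linear (\<lambda>x. B x y)" and "finite S"
    and orth: "\<forall>a\<in>S. \<forall>b\<in>S. a \<noteq> b \<longrightarrow> B a b = 0" and "y \<in> S"
  shows "B (\<Sum>v\<in>S. c v *\<^sub>R v) y = c y * B y y"
proof -
  have "B (\<Sum>v\<in>S. c v *\<^sub>R v) y = (\<Sum>v\<in>S. c v * B v y)"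
    using linear_sum[OF lin, of "\<lambda>v. c v *\<^sub>R v" S y] linear_scale[OF lin] by simp
  also have "\<dots> = c y * B y y + (\<Sum>v\<in>S-{y}. c v * B v y)"
    using sum.remove[OF assms(2,4)] by simp
  also have "(\<Sum>v\<in>S-{y}. c v * B v y) = 0"
    using orth assms(4) by (intro sum.neutral) auto
  finally show ?thesis by simp
qed

lemma signed_orthonormal_independent:
  fixes B :: "'a::real_vector \<Rightarrow> 'a \<Rightarrow> real"
  assumes lin: "\<And>y. linear (\<lambda>x. B x y)" and "finite S" and so: "signed_orthonormal B S"
  shows "independent S"
  unfolding dependent_finite[OF assms(2)]
proof clarify
  fix c v assume sum: "(\<Sum>v\<in>S. c v *\<^sub>R v) = 0" and "v \<in> S" "c v \<noteq> 0"
  have orth: "\<forall>a\<in>S. \<forall>b\<in>S. a \<noteq> b \<longrightarrow> B a b = 0"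
    using so unfolding signed_orthonormal_def by blast
  have "c v * B v v = B 0 v"
    using orthogonal_sum_coefficient[OF lin \<open>finite S\<close> orth \<open>v \<in> S\<close>, of c] sum by simp
  also have "\<dots> = 0"
    using linear_0[OF lin] by simp
  finally show False
    using so \<open>v \<in> S\<close> \<open>c v \<noteq> 0\<close> unfolding signed_orthonormal_def by auto
qed

lemma signed_orthonormal_nondegenerate:
  fixes B :: "'a::real_vector \<Rightarrow> 'a \<Rightarrow> real"
  assumes lin: "\<And>y. linear (\<lambda>x. B x y)" and "finite S" and so: "signed_orthonormal B S"
    and "x \<in> span S" "\<forall>y\<in>S. B x y = 0"
  shows "x = 0"
proof -
  obtain c where c: "x = (\<Sum>v\<in>S. c v *\<^sub>R v)"
    using assms(4) span_finite[OF assms(2)] by auto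
  have orth: "\<forall>a\<in>S. \<forall>b\<in>S. a \<noteq> b \<longrightarrow> B a b = 0"
    using so unfolding signed_orthonormal_def by blast
  have "c y = 0" if "y \<in> S" for y
  proof -
    have "c y * B y y = 0"
      using orthogonal_sum_coefficient[OF lin \<open>finite S\<close> orth that, of c] assms(5) that c by simp
    then show ?thesis
      using so that unfolding signed_orthonormal_def by auto
  qed
  then show ?thesis
    using c by simp
qed

lemma scalar_product_UNIV_bilinear:
  assumes "scalar_product UNIV B"
  shows "bilinear B"
proof -
  have left: "linear (\<lambda>x. B x y)" for y
    using assms unfolding scalar_product_def by (intro linearI) auto
  moreover have "(\<lambda>y. B x y) = (\<lambda>y. B y x)" for x
    using assms unfolding scalar_product_def by auto
  ultimately show ?thesis
    unfolding bilinear_def by metis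
qed

lemma scalar_product_UNIV_symmetric: "scalar_product UNIV B \<Longrightarrow> B x y = B y x"
  unfolding scalar_product_def by auto

lemma scalar_product_UNIV_if_signed_orthonormal_basis:
  assumes "bilinear B" "\<And>x y. B x y = B y x"
    and "finite S" "span S = UNIV" "signed_orthonormal B S"
  shows "scalar_product UNIV B"
proof -
  have lin: "linear (\<lambda>x. B x y)" for y
    using assms(1) unfolding bilinear_def by blast
  show ?thesis
    unfolding scalar_product_def
  proof (intro conjI ballI allI impI)
    show "B x y = B y x" for x y
      by (rule assms(2))
    show "B (x + y) z = B x z + B y z" for x y z
      by (rule bilinear_ladd[OF assms(1)])
    show "B (c *\<^sub>R x) y = c * B x y" for c x y
      using bilinear_lmul[OF assms(1)] by simp
    show "x = 0" if "\<forall>y\<in>UNIV. B x y = 0" for x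
      using signed_orthonormal_nondegenerate[OF lin assms(3,5)] assms(4) that by simp
  qed
qed

section \<open>Clifford modules\<close>

lemma clifford_module_UNIV_linear:
  assumes "clifford_module p q J UNIV" "k < p + q"
  shows "linear (J k)"
  using assms unfolding clifford_module_def by (intro linearI) auto

lemma linear_Jz:
  assumes "\<forall>k<p+q. linear (J k)"
  shows "linear (Jz p q J z)"
  unfolding Jz_def using assms
  by (intro linear_compose_sum) (simp add: linear_compose_scale_right)

lemma Jz_1_1: "Jz 1 1 J z x = z 0 *\<^sub>R J 0 x + z 1 *\<^sub>R J 1 x"
  by (simp add: Jz_def numeral_2_eq_2)

lemma qform_1_1: "qform 1 1 z = (z 0)^2 - (z 1)^2"
  by (simp add: qform_def numeral_2_eq_2)

lemma qform_Suc_Suc: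
  "qform (r + 1) (s + 1) z =
     qform r s (\<lambda>i. z (Suc i)) + qform 1 1 (\<lambda>i. if i = 0 then z 0 else z (Suc (r + s)))"
proof -
  have pos: "(\<Sum>k<r+1. (z k)^2) = (z 0)^2 + (\<Sum>k<r. (z (Suc k))^2)"
    using sum.lessThan_Suc_shift[of "\<lambda>k. (z k)^2" r] by simp
  have "{r+1..<r+1+(s+1)} = {Suc r..<Suc (Suc (r+s))}"
    by auto
  then have "(\<Sum>k\<in>{r+1..<r+1+(s+1)}. (z k)^2) = (\<Sum>k\<in>{Suc r..<Suc (r+s)}. (z k)^2) + (z (Suc (r+s)))^2"
    by (simp add: sum.atLeastLessThan_Suc)
  also have "(\<Sum>k\<in>{Suc r..<Suc (r+s)}. (z k)^2) = (\<Sum>k\<in>{r..<r+s}. (z (Suc k))^2)"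
    by (rule sum.shift_bounds_Suc_ivl)
  finally show ?thesis
    unfolding qform_def using pos by (simp add: numeral_2_eq_2)
qed

locale admissible_Cl11 =
  fixes J :: "nat \<Rightarrow> 'a::real_vector \<Rightarrow> 'a" and B :: "'a \<Rightarrow> 'a \<Rightarrow> real"
  assumes admissible: "admissible_module 1 1 J UNIV B"
begin

lemma clifford: "clifford_module 1 1 J UNIV"
  and scalar_product: "scalar_product UNIV B"
  and skew: "B (Jz 1 1 J z x) y = - B x (Jz 1 1 J z y)"
  using admissible unfolding admissible_module_def by auto

lemma linear_J0: "linear (J 0)" and linear_J1: "linear (J 1)"
  using clifford_module_UNIV_linear[OF clifford] by auto

lemma bilinear: "bilinear B"
  by (rule scalar_product_UNIV_bilinear[OF scalar_product])

lemma symmetric: "B x y = B y x"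
  by (rule scalar_product_UNIV_symmetric[OF scalar_product])

lemma J_square: "Jz 1 1 J z (Jz 1 1 J z x) = - (qform 1 1 z) *\<^sub>R x"
  using clifford unfolding clifford_module_def by auto

lemma J0_J0: "J 0 (J 0 x) = - x"
  using J_square[of "\<lambda>k. if k = 0 then 1 else 0" x] unfolding Jz_1_1 qform_1_1 by simp

lemma J1_J1: "J 1 (J 1 x) = x"
  using J_square[of "\<lambda>k. if k = 1 then 1 else 0" x] unfolding Jz_1_1 qform_1_1 by simp

lemma J1_J0: "J 1 (J 0 x) = - J 0 (J 1 x)"
proof -
  have "J 0 (J 0 x + J 1 x) + J 1 (J 0 x + J 1 x) = 0"
    using J_square[of "\<lambda>k. 1" x] unfolding Jz_1_1 qform_1_1 by simp
  then have "J 1 (J 0 x) + J 0 (J 1 x) = 0"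
    unfolding linear_add[OF linear_J0] linear_add[OF linear_J1] J0_J0 J1_J1
    by (simp add: algebra_simps)
  then show ?thesis
    by (simp add: eq_neg_iff_add_eq_0)
qed

lemma skew_J0: "B (J 0 x) y = - B x (J 0 y)"
  using skew[of "\<lambda>k. if k = 0 then 1 else 0" x y] unfolding Jz_1_1 by simp

lemma skew_J1: "B (J 1 x) y = - B x (J 1 y)"
  using skew[of "\<lambda>k. if k = 1 then 1 else 0" x y] unfolding Jz_1_1 by simp

end

section \<open>The frame of a minimal Cl(1,1)-module\<close>

text \<open>The simplifier rewrites the index \<open>1::nat\<close> to \<open>Suc 0\<close>, which stops the facts about
  \<open>J 1\<close> from matching; hence the frequent \<open>simp del: One_nat_def\<close> below.\<close>

locale Cl11_unit_vector = admissible_Cl11 +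
  fixes u :: "'a::real_vector"
  assumes unit: "B u u = 1 \<or> B u u = -1"
begin

definition frame :: "'a set" where
  "frame = {u, J 0 u, J 1 u, J 0 (J 1 u)}"

lemma B_J0_self: "B x (J 0 x) = 0"
  using skew_J0[of x x] symmetric[of "J 0 x" x] by simp

lemma B_J1_self: "B x (J 1 x) = 0"
  using skew_J1[of x x] symmetric[of "J 1 x" x] by simp

lemma frame_norms:
  "B (J 0 u) (J 0 u) = B u u" "B (J 1 u) (J 1 u) = - B u u"
  "B (J 0 (J 1 u)) (J 0 (J 1 u)) = - B u u"
proof -
  show "B (J 0 u) (J 0 u) = B u u"
    unfolding skew_J0 J0_J0 bilinear_rneg[OF bilinear] by simp
  show J1u: "B (J 1 u) (J 1 u) = - B u u"
    unfolding skew_J1 J1_J1 ..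
  show "B (J 0 (J 1 u)) (J 0 (J 1 u)) = - B u u"
    unfolding skew_J0 J0_J0 bilinear_rneg[OF bilinear] J1u by simp
qed

lemma frame_orthogonal:
  "B u (J 0 u) = 0" "B u (J 1 u) = 0" "B u (J 0 (J 1 u)) = 0"
  "B (J 0 u) (J 1 u) = 0" "B (J 0 u) (J 0 (J 1 u)) = 0" "B (J 1 u) (J 0 (J 1 u)) = 0"
proof -
  show "B u (J 0 u) = 0" "B u (J 1 u) = 0" "B (J 1 u) (J 0 (J 1 u)) = 0"
    by (rule B_J0_self B_J1_self)+
  show "B (J 0 u) (J 0 (J 1 u)) = 0"
    unfolding skew_J0 J0_J0 bilinear_rneg[OF bilinear] B_J1_self by simp
  have "B (J 0 u) (J 1 u) = - B u (J 0 (J 1 u))"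
    by (rule skew_J0)
  moreover have "B (J 1 u) (J 0 u) = B u (J 0 (J 1 u))"
    unfolding skew_J1 J1_J0 bilinear_rneg[OF bilinear] by simp
  ultimately show "B (J 0 u) (J 1 u) = 0" "B u (J 0 (J 1 u)) = 0"
    using symmetric[of "J 0 u" "J 1 u"] by simp_all
qed

lemma signed_orthonormal_frame: "signed_orthonormal B frame"
  using frame_norms frame_orthogonal unit symmetric
  unfolding signed_orthonormal_def frame_def by auto

lemma frame_J_signed_permutation:
  assumes "k < 2"
  shows "\<forall>a\<in>frame. J k a \<in> frame \<or> - J k a \<in> frame"
proof -
  have "k = 0 \<or> k = 1"
    using assms by auto
  then show ?thesis
    unfolding frame_def using J0_J0 J1_J1 J1_J0 by (auto simp del: One_nat_def)
qed

lemma frame_integral: "k < 2 \<Longrightarrow> integral_on B frame (J k)"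
  using integral_on_signed_permutation[OF signed_orthonormal_frame] bilinear frame_J_signed_permutation
  unfolding bilinear_def by blast

lemma u_in_span_frame: "u \<in> span frame"
  unfolding frame_def by (simp add: span_base)

lemma u_nonzero: "u \<noteq> 0"
  using unit bilinear_lzero[OF bilinear, of u] by auto

lemma J_span_frame:
  assumes "k < 2" "x \<in> span frame"
  shows "J k x \<in> span frame"
proof -
  have lin: "linear (J k)"
    using clifford_module_UNIV_linear[OF clifford] assms(1) by simp
  have "J k ` frame \<subseteq> span frame"
    using frame_J_signed_permutation[OF assms(1)] span_base span_neg by (metis image_subsetI minus_minus)
  then have "span (J k ` frame) \<subseteq> span frame"
    by (simp add: span_minimal)
  then show ?thesis
    using span_linear_image[OF lin] assms(2) by blast
qed

lemma admissible_span_frame: "admissible_module 1 1 J (span frame) B"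
proof -
  have lin: "linear (\<lambda>x. B x y)" for y
    using bilinear unfolding bilinear_def by blast
  have "finite frame"
    unfolding frame_def by simp
  have "clifford_module 1 1 J (span frame)"
    using clifford J_span_frame \<open>finite frame\<close>
    unfolding clifford_module_def by auto
  moreover have "scalar_product (span frame) B"
    unfolding scalar_product_def
  proof (intro conjI ballI allI impI)
    show "B x y = B y x" for x y
      by (rule symmetric)
    show "B (x + y) z = B x z + B y z" for x y z
      by (rule bilinear_ladd[OF bilinear])
    show "B (c *\<^sub>R x) y = c * B x y" for c x y
      using bilinear_lmul[OF bilinear] by simp
    show "x = 0" if "x \<in> span frame" "\<forall>y\<in>span frame. B x y = 0" for x
      using signed_orthonormal_nondegenerate[OF lin \<open>finite frame\<close> signed_orthonormal_frame] that
      by (simp add: span_base)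
  qed
  ultimately show ?thesis
    using skew unfolding admissible_module_def by blast
qed

text \<open>The linear map exchanging \<open>u \<leftrightarrow> J 0 u\<close> and \<open>J 1 u \<leftrightarrow> J 0 (J 1 u)\<close>, written through
  the coefficients \<open>B u u * B x e\<close> of \<open>x\<close> in the orthogonal frame (as \<open>B e e = \<plusminus>B u u\<close>).\<close>

definition swap :: "'a \<Rightarrow> 'a" where
  "swap x = B u u *\<^sub>R (B x u *\<^sub>R J 0 u + B x (J 0 u) *\<^sub>R u
     - B x (J 1 u) *\<^sub>R J 0 (J 1 u) - B x (J 0 (J 1 u)) *\<^sub>R J 1 u)"

lemma linear_swap: "linear swap"
  unfolding swap_def
  by (intro linearI) (simp_all add: bilinear_ladd[OF bilinear] bilinear_lmul[OF bilinear] algebra_simps)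

lemma swap_frame:
  "swap u = J 0 u" "swap (J 0 u) = u" "swap (J 1 u) = J 0 (J 1 u)" "swap (J 0 (J 1 u)) = J 1 u"
proof -
  have "B u u * B u u = 1"
    using unit by auto
  moreover note frame_norms frame_orthogonal
    frame_orthogonal[THEN trans[OF symmetric]]
  ultimately show "swap u = J 0 u" "swap (J 0 u) = u" "swap (J 1 u) = J 0 (J 1 u)" "swap (J 0 (J 1 u)) = J 1 u"
    unfolding swap_def by (simp_all del: One_nat_def)
qed

lemma swap_integral: "integral_on B frame swap"
  using integral_on_signed_permutation[OF signed_orthonormal_frame] bilinear swap_frame
  unfolding bilinear_def frame_def by auto

context
  assumes spanning: "span frame = UNIV"
begin

lemma linear_eq_on_frame:
  assumes "linear f" "linear g" "\<And>a. a \<in> frame \<Longrightarrow> f a = g a"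
  shows "f x = g x"
  using linear_eq_on_span[OF assms] spanning by blast

lemma swap_swap: "swap (swap x) = x"
proof -
  have "(swap \<circ> swap) x = id x"
    by (rule linear_eq_on_frame[where f = "swap \<circ> swap" and g = id])
      (auto simp: frame_def swap_frame linear_compose linear_swap linear_id simp del: One_nat_def)
  then show ?thesis
    by simp
qed

lemma swap_J0: "swap (J 0 x) = - J 0 (swap x)"
proof -
  have lin: "linear (\<lambda>x. - J 0 (swap x))"
    using linear_compose_neg[OF linear_compose[OF linear_swap linear_J0]] by (simp add: o_def)
  have "(swap \<circ> J 0) x = (\<lambda>x. - J 0 (swap x)) x"
    by (rule linear_eq_on_frame[where f = "swap \<circ> J 0" and g = "\<lambda>x. - J 0 (swap x)"])
      (use lin in \<open>auto simp: frame_def swap_frame linear_compose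
        linear_swap linear_J0 linear_neg[OF linear_swap] J0_J0 simp del: One_nat_def\<close>)
  then show ?thesis
    by simp
qed

lemma swap_J1: "swap (J 1 x) = - J 1 (swap x)"
proof -
  have lin: "linear (\<lambda>x. - J 1 (swap x))"
    using linear_compose_neg[OF linear_compose[OF linear_swap linear_J1]] by (simp add: o_def)
  have "(swap \<circ> J 1) x = (\<lambda>x. - J 1 (swap x)) x"
    by (rule linear_eq_on_frame[where f = "swap \<circ> J 1" and g = "\<lambda>x. - J 1 (swap x)"])
      (use lin in \<open>auto simp: frame_def swap_frame linear_compose
        linear_swap linear_J1 linear_neg[OF linear_swap] linear_neg[OF linear_J1] J0_J0 J1_J1 J1_J0
        simp del: One_nat_def\<close>)
  then show ?thesis
    by simp
qed

lemma swap_symmetric: "B (swap x) y = B x (swap y)"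
proof (rule bilinear_eq[where f = "\<lambda>x y. B (swap x) y" and g = "\<lambda>x y. B x (swap y)"
      and B = frame and C = frame and S = UNIV and T = UNIV])
  show "bilinear (\<lambda>x y. B (swap x) y)" "bilinear (\<lambda>x y. B x (swap y))"
    using bilinear_compose_left bilinear_compose_right bilinear linear_swap by blast+
  show "a \<in> frame \<Longrightarrow> b \<in> frame \<Longrightarrow> B (swap a) b = B a (swap b)" for a b
    using frame_norms frame_orthogonal frame_orthogonal[THEN trans[OF symmetric]]
    unfolding frame_def by (auto simp: swap_frame simp del: One_nat_def)
qed (use spanning in auto)

end

end

lemma minimal_Cl11_span_frame:
  fixes J :: "nat \<Rightarrow> real^'m::finite \<Rightarrow> real^'m"
  assumes "minimal_admissible_Cl11 J B" "B u u = 1 \<or> B u u = -1"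
  shows "span (Cl11_unit_vector.frame J u) = UNIV"
proof -
  interpret Cl11_unit_vector J B u
    using assms unfolding minimal_admissible_Cl11_def by unfold_locales auto
  have "span frame \<noteq> {0}"
    using u_in_span_frame u_nonzero by blast
  then have "CARD('m) \<le> dim (span frame)"
    using assms(1) admissible_span_frame unfolding minimal_admissible_Cl11_def by blast
  moreover have "dim (span frame) \<le> CARD('m)"
    using dim_subset_UNIV[of "span frame"] by simp
  ultimately have "dim (span frame) = DIM(real^'m)"
    by simp
  then show ?thesis
    using dim_eq_full[of "span frame"] by (simp add: span_span)
qed

section \<open>The tensor product module\<close>

locale Cl_tensor_Cl11 = U: admissible_Cl11 JU BU
  for JU :: "nat \<Rightarrow> real^'m::finite \<Rightarrow> real^'m" and BU +
  fixes r s :: nat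
    and JV :: "nat \<Rightarrow> real^'n::finite \<Rightarrow> real^'n" and BV :: "real^'n \<Rightarrow> real^'n \<Rightarrow> real"
    and A :: "real^'m \<Rightarrow> real^'m"
    and T :: "real^('n \<times> 'm) \<Rightarrow> real^('n \<times> 'm) \<Rightarrow> real"
  assumes V: "admissible_module r s JV UNIV BV"
    and linear_A: "linear A" and A_A: "A (A x) = x" and A_symmetric: "BU (A x) y = BU x (A y)"
    and A_J0: "A (JU 0 x) = - JU 0 (A x)" and A_J1: "A (JU 1 x) = - JU 1 (A x)"
    and bilinear_T: "bilinear T"
    and T_tensor: "T (tensor v u) (tensor v' u') = BV v v' * BU u u'"
begin

lemma linear_JV: "k < r + s \<Longrightarrow> linear (JV k)"
  using V clifford_module_UNIV_linear unfolding admissible_module_def by blast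

lemma JV_square: "Jz r s JV z (Jz r s JV z x) = - (qform r s z) *\<^sub>R x"
  using V unfolding admissible_module_def clifford_module_def by blast

lemma JV_skew: "BV (Jz r s JV z x) y = - BV x (Jz r s JV z y)"
  using V unfolding admissible_module_def by blast

lemma BV_symmetric: "BV x y = BV y x"
  using V scalar_product_UNIV_symmetric unfolding admissible_module_def by blast

lemma A_Jz: "A (Jz 1 1 JU z x) = - Jz 1 1 JU z (A x)"
  unfolding Jz_1_1 using A_J0 A_J1 by (simp add: linear_add[OF linear_A] linear_scale[OF linear_A])

text \<open>Generator 0 is the new positive generator, generators \<open>1..r+s\<close> are those of \<open>V\<close> shifted
  by one, and the last one is the new negative generator, matching the ordering of
  \<open>qform (r + 1) (s + 1)\<close>.\<close>

definition gens :: "nat \<Rightarrow> real^('n \<times> 'm) \<Rightarrow> real^('n \<times> 'm)" where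
  "gens k = (if k = 0 then tensor_map id (JU 0)
     else if k \<le> r + s then tensor_map (JV (k - 1)) A
     else tensor_map id (JU 1))"

lemma linear_gens: "linear (gens k)"
  unfolding gens_def by (simp add: linear_tensor_map)

lemma linear_Jz_gens: "linear (Jz (r + 1) (s + 1) gens z)"
  by (simp add: linear_Jz linear_gens)

lemma Jz_gens_tensor:
  "Jz (r + 1) (s + 1) gens z (tensor v u) =
     tensor (Jz r s JV (\<lambda>i. z (Suc i)) v) (A u)
     + tensor v (Jz 1 1 JU (\<lambda>i. if i = 0 then z 0 else z (Suc (r + s))) u)"
proof -
  have "Jz (r + 1) (s + 1) gens z (tensor v u) = (\<Sum>k<Suc (Suc (r + s)). z k *\<^sub>R gens k (tensor v u))"
    unfolding Jz_def by simp
  also have "\<dots> = z 0 *\<^sub>R gens 0 (tensor v u) + (\<Sum>i<r + s. z (Suc i) *\<^sub>R gens (Suc i) (tensor v u))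
      + z (Suc (r + s)) *\<^sub>R gens (Suc (r + s)) (tensor v u)"
    by (simp only: sum.lessThan_Suc[of _ "Suc (r + s)"] sum.lessThan_Suc_shift[of _ "r + s"])
  also have "(\<Sum>i<r + s. z (Suc i) *\<^sub>R gens (Suc i) (tensor v u))
      = tensor (\<Sum>i<r + s. z (Suc i) *\<^sub>R JV i v) (A u)"
    by (simp add: gens_def tensor_map_tensor linear_JV linear_A
        linear_sum[OF linear_tensor_left] linear_scale[OF linear_tensor_left])
  also have "gens 0 (tensor v u) = tensor v (JU 0 u)"
    unfolding gens_def using tensor_map_tensor[OF linear_id U.linear_J0] by simp
  also have "gens (Suc (r + s)) (tensor v u) = tensor v (JU 1 u)"
    unfolding gens_def using tensor_map_tensor[OF linear_id U.linear_J1] by simp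
  finally show ?thesis
    unfolding Jz_def Jz_1_1
    by (simp add: linear_add[OF linear_tensor_right] linear_scale[OF linear_tensor_right])
qed

lemma Jz_gens_square:
  "Jz (r + 1) (s + 1) gens z (Jz (r + 1) (s + 1) gens z x) = - qform (r + 1) (s + 1) z *\<^sub>R x"
proof -
  let ?J = "Jz (r + 1) (s + 1) gens z"
    and ?zV = "\<lambda>i. z (Suc i)" and ?zU = "\<lambda>i. if i = 0 then z 0 else z (Suc (r + s))"
  let ?JV = "Jz r s JV ?zV" and ?JU = "Jz 1 1 JU ?zU"
  have "?J (?J (tensor v u)) = - qform (r + 1) (s + 1) z *\<^sub>R tensor v u" for v u
  proof -
    have "?J (?J (tensor v u)) = tensor (?JV (?JV v)) (A (A u)) + tensor (?JV v) (?JU (A u))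
        + (tensor (?JV v) (A (?JU u)) + tensor v (?JU (?JU u)))"
      unfolding Jz_gens_tensor linear_add[OF linear_Jz_gens] ..
    also have "tensor (?JV v) (?JU (A u)) = - tensor (?JV v) (A (?JU u))"
      unfolding A_Jz linear_neg[OF linear_tensor_right] by simp
    also have "tensor (?JV (?JV v)) (A (A u)) + - tensor (?JV v) (A (?JU u))
        + (tensor (?JV v) (A (?JU u)) + tensor v (?JU (?JU u)))
        = tensor (- qform r s ?zV *\<^sub>R v) u + tensor v (- qform 1 1 ?zU *\<^sub>R u)"
      unfolding A_A JV_square U.J_square by simp
    also have "\<dots> = - qform (r + 1) (s + 1) z *\<^sub>R tensor v u"
      unfolding qform_Suc_Suc
      by (simp add: linear_scale[OF linear_tensor_left] linear_scale[OF linear_tensor_right]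
          linear_neg[OF linear_tensor_left] linear_neg[OF linear_tensor_right] algebra_simps
          del: One_nat_def)
    finally show ?thesis .
  qed
  then have "(\<lambda>x. ?J (?J x)) = (\<lambda>x. - qform (r + 1) (s + 1) z *\<^sub>R x)"
    by (intro linear_eq_on_tensors linear_compose[OF linear_Jz_gens linear_Jz_gens, unfolded o_def]
        linear_scale_self)
  then show ?thesis
    by metis
qed

lemma Jz_gens_skew: "T (Jz (r + 1) (s + 1) gens z x) y = - T x (Jz (r + 1) (s + 1) gens z y)"
proof -
  have "(\<lambda>x y. T (Jz (r + 1) (s + 1) gens z x) y) = (\<lambda>x y. - T x (Jz (r + 1) (s + 1) gens z y))"
  proof (rule bilinear_eq_on_tensors)
    show "bilinear (\<lambda>x y. T (Jz (r + 1) (s + 1) gens z x) y)"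
      by (rule bilinear_compose_left[OF bilinear_T linear_Jz_gens])
    show "bilinear (\<lambda>x y. - T x (Jz (r + 1) (s + 1) gens z y))"
      by (rule bilinear_uminus[OF bilinear_compose_right[OF bilinear_T linear_Jz_gens]])
    show "T (Jz (r + 1) (s + 1) gens z (tensor v u)) (tensor v' u') =
        - T (tensor v u) (Jz (r + 1) (s + 1) gens z (tensor v' u'))" for v u v' u'
      unfolding Jz_gens_tensor bilinear_ladd[OF bilinear_T] bilinear_radd[OF bilinear_T] T_tensor
      by (simp add: JV_skew U.skew A_symmetric algebra_simps del: One_nat_def)
  qed
  then show ?thesis
    by metis
qed

lemma T_symmetric: "T x y = T y x"
proof -
  have "T = (\<lambda>x y. T y x)"
    by (rule bilinear_eq_on_tensors[OF bilinear_T bilinear_swap[OF bilinear_T]])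
      (simp add: T_tensor BV_symmetric U.symmetric)
  then show ?thesis
    by metis
qed

lemma gens_integral:
  assumes "signed_orthonormal BV S" "\<forall>k<r+s. integral_on BV S (JV k)"
    and "integral_on BU E (JU 0)" "integral_on BU E (JU 1)" "integral_on BU E A"
    and "k < r + 1 + (s + 1)"
  shows "integral_on T ((\<lambda>(a, b). tensor a b) ` (S \<times> E)) (gens k)"
proof -
  have T: "\<forall>v u v' u'. T (tensor v u) (tensor v' u') = BV v v' * BU u u'"
    by (simp add: T_tensor)
  note integral_tensor_map = integral_on_tensor_map[OF T]
  have "integral_on BV S id"
    by (rule signed_orthonormal_integral_on_id[OF assms(1)])
  then show ?thesis
    using assms(2-6) linear_JV linear_A U.linear_J0 U.linear_J1 linear_id
    unfolding gens_def by (auto intro!: integral_tensor_map)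
qed

lemma admissible_integral_module_gens:
  assumes "finite S" "span S = UNIV" "signed_orthonormal BV S" "\<forall>k<r+s. integral_on BV S (JV k)"
    and "finite E" "span E = UNIV" "signed_orthonormal BU E"
    and "integral_on BU E (JU 0)" "integral_on BU E (JU 1)" "integral_on BU E A"
  shows "admissible_integral_module (r + 1) (s + 1) gens UNIV T"
proof -
  let ?Bas = "(\<lambda>(a, b). tensor a b) ` (S \<times> E)"
  have "finite ?Bas"
    using assms(1,5) by simp
  have "span ?Bas = UNIV"
    by (rule span_tensor_image_UNIV[OF assms(2,6)])
  have "signed_orthonormal T ?Bas"
    using signed_orthonormal_tensor[OF _ assms(3,7)] T_tensor by blast
  have lin: "linear (\<lambda>x. T x y)" for y
    using bilinear_T unfolding bilinear_def by blast
  have "independent ?Bas"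
    by (rule signed_orthonormal_independent[OF lin \<open>finite ?Bas\<close> \<open>signed_orthonormal T ?Bas\<close>])
  have "scalar_product UNIV T"
    by (rule scalar_product_UNIV_if_signed_orthonormal_basis[OF bilinear_T T_symmetric
          \<open>finite ?Bas\<close> \<open>span ?Bas = UNIV\<close> \<open>signed_orthonormal T ?Bas\<close>])
  moreover have "clifford_module (r + 1) (s + 1) gens UNIV"
    unfolding clifford_module_def
    using linear_gens Jz_gens_square
    by (auto intro!: exI[of _ Basis] simp: linear_add linear_scale)
  ultimately show ?thesis
    unfolding admissible_integral_module_iff admissible_module_def
    using Jz_gens_skew gens_integral[OF assms(3,4,8-10)] \<open>independent ?Bas\<close> \<open>span ?Bas = UNIV\<close>
      \<open>signed_orthonormal T ?Bas\<close>
    by blast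
qed

end

lemma signed_orthonormal_spanning_unit_vector:
  assumes "span S = (UNIV :: (real^'m::finite) set)" "signed_orthonormal B S"
  shows "\<exists>u. B u u = 1 \<or> B u u = -1"
proof -
  have "axis undefined (1::real) \<noteq> (0 :: real^'m)"
    by simp
  then have "S \<noteq> {}"
    using assms(1) by auto
  then show ?thesis
    using assms(2) unfolding signed_orthonormal_def by blast
qed

theorem theorem7p7:
  fixes r s :: nat
    and JV :: "nat \<Rightarrow> real^'n \<Rightarrow> real^'n" and BV :: "real^'n \<Rightarrow> real^'n \<Rightarrow> real"
    and JU :: "nat \<Rightarrow> real^'m \<Rightarrow> real^'m" and BU :: "real^'m \<Rightarrow> real^'m \<Rightarrow> real"
    and T :: "real^('n \<times> 'm) \<Rightarrow> real^('n \<times> 'm) \<Rightarrow> real"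
  assumes "admissible_integral_module r s JV UNIV BV"
    and "admissible_integral_module 1 1 JU UNIV BU"
    and "minimal_admissible_Cl11 JU BU"
    and "bilinear T"
    and "\<forall>v u v' u'. T (tensor v u) (tensor v' u') = BV v v' * BU u u'"
  shows "\<exists>J. admissible_integral_module (r + 1) (s + 1) J UNIV T"
proof -
  obtain BasV where BasV: "independent BasV" "span BasV = UNIV" "signed_orthonormal BV BasV"
      "\<forall>k<r+s. integral_on BV BasV (JV k)"
    using assms(1) unfolding admissible_integral_module_iff by blast
  obtain BasU where "span BasU = UNIV" "signed_orthonormal BU BasU"
    using assms(2) unfolding admissible_integral_module_iff by blast
  then obtain u where u: "BU u u = 1 \<or> BU u u = -1"
    using signed_orthonormal_spanning_unit_vector by blast
  interpret U: Cl11_unit_vector JU BU u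
    using assms(2) u unfolding admissible_integral_module_iff by unfold_locales auto
  have spanning: "span U.frame = UNIV"
    by (rule minimal_Cl11_span_frame[OF assms(3) u])
  interpret Cl_tensor_Cl11 JU BU r s JV BV U.swap T
    using assms(1,4,5) U.linear_swap U.swap_swap[OF spanning] U.swap_symmetric[OF spanning]
      U.swap_J0[OF spanning] U.swap_J1[OF spanning]
    unfolding admissible_integral_module_iff
    by unfold_locales (auto simp: linear_add linear_scale)
  have "finite BasV" "finite U.frame"
    using finiteI_independent[OF BasV(1)] unfolding U.frame_def by simp_all
  moreover have "integral_on BU U.frame (JU 0)" "integral_on BU U.frame (JU 1)"
    using U.frame_integral by simp_all
  ultimately have "admissible_integral_module (r + 1) (s + 1) gens UNIV T"
    using admissible_integral_module_gens BasV(2-4) spanning U.signed_orthonormal_frame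
      U.swap_integral
    by blast
  then show ?thesis
    by blast
qed

end
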